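(* In the setting described in the context, assume $q$ is a square, let $d=q-\sqrt q+1$ and $t=(q^2+q+1)/d$. Then $t=q+\sqrt q+1$ and $w_u\le 2$ for every $u$. Moreover, for $j=0,1,2$, the number $v_j$ of indices $u\in\{0,\dots,t-1\}$ with $w_u=j$ is $v_0=\frac12(q+\sqrt q)$, $v_1=\sqrt q+1$, $v_2=\frac12(q-\sqrt q)$.
   Context: Let $q=p^h$ with $p$ prime, $h\ge1$. Let $\alpha$ be a primitive element of $\mathbb{F}_{q^3}$; the points of $PG(2,q)$ are the 1-dimensional $\mathbb{F}_q$-subspaces of $\mathbb{F}_{q^3}$, and $P_i$ denotes the point represented by $\alpha^i$, so $PG(2,q)=\{P_0,\dots,P_{q^2+q}\}$. Let $\tau:P_i\mapsto P_{ip\bmod(q^2+q+1)}$ (a collineation) and let $\ell_0$ be a line of $PG(2,q)$ fixed by $\tau$. For a positive divisor $t$ of $q^2+q+1$ and $i=0,\dots,t-1$ let $O_i=\{P_u:u\equiv i\pmod t\}$, and for $u=0,\dots,t-1$ let $w_u=|\ell_0\cap O_u|$. *)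

theory Defs
  imports "HOL-Computational_Algebra.Primes"
begin

definition Fsub :: "nat \<Rightarrow> 'a::field set" where
  "Fsub q = {x. x ^ q = x}"

definition primitive_elem :: "'a::field \<Rightarrow> bool" where
  "primitive_elem a \<longleftrightarrow> a \<noteq> 0 \<and> (\<forall>x. x \<noteq> 0 \<longrightarrow> (\<exists>k::nat. a ^ k = x))"

text \<open>A 2-dimensional F_q-subspace of the ambient field (a line of PG(2,q)).\<close>
definition is_line_subspace :: "nat \<Rightarrow> 'a::field set \<Rightarrow> bool" where
  "is_line_subspace q W \<longleftrightarrow>
     (\<exists>x y. (\<forall>a b. a \<in> Fsub q \<longrightarrow> b \<in> Fsub q \<longrightarrow> a * x + b * y = 0 \<longrightarrow> a = 0 \<and> b = 0) \<and>
            W = {a * x + b * y | a b. a \<in> Fsub q \<and> b \<in> Fsub q})"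

text \<open>Indices i in {0..<q^2+q+1} of the points P_i (represented by alpha^i) lying on the line W.\<close>
definition line_idx :: "nat \<Rightarrow> 'a::field \<Rightarrow> 'a set \<Rightarrow> nat set" where
  "line_idx q a W = {i \<in> {0..<q^2+q+1}. a ^ i \<in> W}"

end

theory Submission
  imports Defs "HOL-Number_Theory.Residues"
begin

(* Let m = q^2 + q + 1. The point P_i is spanned by alpha^i, so points are residues modulo m, and
   a line L consists of q + 1 residues. Two properties of L determine the numbers w_u.

   L is a planar difference set: every g with m not dividing g is a difference i' - i (mod m) of
   exactly one pair of L. Counting shows that some nonzero z of the line W has alpha^g z in W, which
   gives one pair; a second pair would make W stable under multiplication by gamma = alpha^g, so
   gamma would satisfy a quadratic equation over F_q, which forces gamma into F_q because gamma,
   gamma^q and gamma^(q^2) are all roots.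

   For q = s^2 no class O_u contains three points of L. Three such points give a relation
   y + e = w z, where y, z are quotients of order dividing D = (q - 1) d = (s^3 + 1)(s - 1) and
   e, w lie in F_q^*. Then y^(s^3+1) and (y + e)^(s^3+1) lie in F_s, and expanding the latter with
   the Frobenius map yields a quadratic equation for y over F_q, so y is in F_q and two of the
   points coincide.

   So every class meets L in at most two points, and counting the ordered pairs of L in a common
   class gives 2 v_2 = d - 1, one pair for each shift k t with 0 < k < d. Together with
   v_0 + v_1 + v_2 = t and v_1 + 2 v_2 = q + 1 this determines v. *)

section \<open>Residue classes of a planar difference set\<close>

lemma same_residue_imp_shift:
  fixes i j t d :: nat
  assumes "i < t * d" "j < t * d" "i \<noteq> j" "i mod t = j mod t"
  shows "\<exists>k. 1 \<le> k \<and> k < d \<and> j = (i + k * t) mod (t * d)"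
proof -
  have shift: "\<exists>k. 1 \<le> k \<and> k < d \<and> b = a + k * t" if "a < b" "b < t * d" "a mod t = b mod t"
    for a b :: nat
  proof -
    have "t dvd b - a" using that mod_eq_dvd_iff_nat[of a b t] by simp
    then obtain k where k: "b - a = t * k" ..
    have "t * k < t * d" using k that by linarith
    moreover have "k \<noteq> 0" using k that by (cases k) auto
    moreover have "b = a + k * t" using k that by (simp add: mult.commute)
    ultimately show ?thesis by (intro exI[of _ k]) auto
  qed
  show ?thesis
  proof (cases "i < j")
    case True
    then show ?thesis using shift[of i j] assms by auto
  next
    case False
    then obtain k where k: "1 \<le> k" "k < d" "i = j + k * t"
      using shift[of j i] assms by auto
    have "i + (d - k) * t = j + t * d"
      using k by (simp add: diff_mult_distrib algebra_simps)
    then have "j = (i + (d - k) * t) mod (t * d)" using assms(2) by simp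
    then show ?thesis using k by (intro exI[of _ "d - k"]) auto
  qed
qed

definition residue_count :: "nat set \<Rightarrow> nat \<Rightarrow> nat \<Rightarrow> nat" where
  "residue_count L t u = card {i \<in> L. i mod t = u}"

definition same_residue_pairs :: "nat set \<Rightarrow> nat \<Rightarrow> (nat \<times> nat) set" where
  "same_residue_pairs L t = {(i, j). i \<in> L \<and> j \<in> L \<and> i \<noteq> j \<and> i mod t = j mod t}"

lemma sum_residue_count:
  assumes "finite L" "t > 0"
  shows "(\<Sum>u<t. residue_count L t u) = card L"
proof -
  have "card L = card (\<Union>u<t. {i \<in> L. i mod t = u})"
    using assms(2) by (intro arg_cong[where f = card]) auto
  also have "\<dots> = (\<Sum>u<t. card {i \<in> L. i mod t = u})"
    using assms(1) by (intro card_UN_disjoint) auto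
  finally show ?thesis by (simp add: residue_count_def)
qed

lemma card_same_residue_pairs_eq_sum:
  assumes "finite L" "t > 0"
  shows "card (same_residue_pairs L t) = (\<Sum>u<t. residue_count L t u * (residue_count L t u - 1))"
proof -
  define S where "S u = {i \<in> L. i mod t = u}" for u
  have fin: "finite (S u)" for u using assms(1) by (simp add: S_def)
  have "same_residue_pairs L t = (\<Union>u<t. S u \<times> S u - (\<lambda>i. (i, i)) ` S u)"
    using assms(2) by (auto simp: same_residue_pairs_def S_def)
  then have "card (same_residue_pairs L t) = (\<Sum>u<t. card (S u \<times> S u - (\<lambda>i. (i, i)) ` S u))"
    using fin by (simp only:) (intro card_UN_disjoint, auto simp: S_def)
  also have "\<dots> = (\<Sum>u<t. card (S u) * card (S u) - card (S u))"
  proof (rule sum.cong)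
    fix u
    have "card ((\<lambda>i. (i, i)) ` S u) = card (S u)" by (simp add: card_image inj_on_def)
    then show "card (S u \<times> S u - (\<lambda>i. (i, i)) ` S u) = card (S u) * card (S u) - card (S u)"
      using fin by (subst card_Diff_subset) (auto simp: card_cartesian_product)
  qed simp
  finally show ?thesis by (simp add: residue_count_def S_def diff_mult_distrib2)
qed

lemma card_same_residue_pairs_shifts:
  fixes L :: "nat set" and t d :: nat
  assumes "t > 0" "L \<subseteq> {..<t * d}"
    and shift: "\<And>k. 1 \<le> k \<Longrightarrow> k < d \<Longrightarrow> card {i \<in> L. (i + k * t) mod (t * d) \<in> L} = 1"
  shows "card (same_residue_pairs L t) = d - 1"
proof -
  define m where "m = t * d"
  define A where "A k = {i \<in> L. (i + k * t) mod m \<in> L}" for k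
  define f where "f = (\<lambda>(k, i). (i, (i + k * t) mod m))"
  have "bij_betw f (Sigma {1..<d} A) (same_residue_pairs L t)"
  proof (rule bij_betwI')
    fix x y assume "x \<in> Sigma {1..<d} A" "y \<in> Sigma {1..<d} A"
    then obtain k i k' i' where xy: "x = (k, i)" "y = (k', i')" "k < d" "k' < d" by auto
    show "(f x = f y) = (x = y)"
    proof
      assume "f x = f y"
      then have "i = i'" and "(i + k * t) mod m = (i + k' * t) mod m" by (auto simp: f_def xy)
      then have "(k * t) mod m = (k' * t) mod m"
        using cong_add_lcancel_nat[of i "k * t" "k' * t" m] by (simp add: cong_def)
      moreover have "k * t < m" "k' * t < m" using xy \<open>t > 0\<close> by (auto simp: m_def)
      ultimately show "x = y" using \<open>i = i'\<close> \<open>t > 0\<close> by (simp add: xy)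
    qed simp
  next
    fix x assume "x \<in> Sigma {1..<d} A"
    then obtain k i where x: "x = (k, i)" "1 \<le> k" "k < d" "i \<in> L" "(i + k * t) mod m \<in> L"
      by (auto simp: A_def)
    have "i < m" using x assms(2) by (auto simp: m_def)
    have "0 < k * t" "k * t < m" using x \<open>t > 0\<close> by (auto simp: m_def)
    then have "(i + k * t) mod m \<noteq> i mod m"
      using cong_add_lcancel_nat[of i "k * t" 0 m] by (simp add: cong_def)
    then have "(i + k * t) mod m \<noteq> i" using \<open>i < m\<close> by simp
    moreover have "(i + k * t) mod m mod t = i mod t" by (simp add: m_def mod_mod_cancel)
    ultimately show "f x \<in> same_residue_pairs L t"
      using x by (simp add: f_def same_residue_pairs_def)
  next
    fix y assume "y \<in> same_residue_pairs L t"
    then obtain i j where ij: "y = (i, j)" "i \<in> L" "j \<in> L" "i \<noteq> j" "i mod t = j mod t"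
      by (auto simp: same_residue_pairs_def)
    then obtain k where "1 \<le> k" "k < d" "j = (i + k * t) mod m"
      using same_residue_imp_shift[of i t d j] assms(2) by (auto simp: m_def)
    then show "\<exists>x\<in>Sigma {1..<d} A. y = f x"
      using ij by (intro bexI[of _ "(k, i)"]) (auto simp: A_def f_def)
  qed
  then have "card (same_residue_pairs L t) = card (Sigma {1..<d} A)"
    by (simp add: bij_betw_same_card)
  also have "\<dots> = (\<Sum>k\<in>{1..<d}. card (A k))"
    using assms(2) by (intro card_SigmaI) (auto simp: A_def intro: finite_subset)
  also have "\<dots> = d - 1" using shift by (simp add: A_def m_def)
  finally show ?thesis .
qed

lemma card_le_2_if_no_three_distinct:
  assumes "\<And>a b c. a \<in> S \<Longrightarrow> b \<in> S \<Longrightarrow> c \<in> S \<Longrightarrow> a \<noteq> b \<Longrightarrow> a \<noteq> c \<Longrightarrow> b \<noteq> c \<Longrightarrow> False"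
  shows "card S \<le> 2"
proof (rule ccontr)
  assume "\<not> card S \<le> 2"
  then have "Suc (Suc (Suc 0)) \<le> card S" by simp
  then obtain a b c where "a \<in> S" "b \<in> S" "c \<in> S" "a \<noteq> b" "a \<noteq> c" "b \<noteq> c"
    by (auto simp: card_le_Suc_iff)
  then show False using assms by blast
qed

lemma level_set_counts_le_2:
  fixes w :: "'a \<Rightarrow> nat"
  assumes "finite A" "\<And>u. u \<in> A \<Longrightarrow> w u \<le> 2"
  defines "v j \<equiv> card {u \<in> A. w u = j}"
  shows "v 0 + v 1 + v 2 = card A"
    and "v 1 + 2 * v 2 = sum w A"
    and "2 * v 2 = (\<Sum>u\<in>A. w u * (w u - 1))"
proof -
  have v: "v j = (\<Sum>u\<in>A. if w u = j then 1 else 0)" for j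
    using assms(1) by (simp add: v_def sum.If_cases Int_def)
  have cases: "w u = 0 \<or> w u = 1 \<or> w u = 2" if "u \<in> A" for u
    using assms(2)[OF that] by auto
  show "v 0 + v 1 + v 2 = card A"
    unfolding v sum.distrib[symmetric] card_eq_sum by (rule sum.cong) (auto dest!: cases)
  show "v 1 + 2 * v 2 = sum w A"
    unfolding v sum_distrib_left sum.distrib[symmetric] by (rule sum.cong) (auto dest!: cases)
  show "2 * v 2 = (\<Sum>u\<in>A. w u * (w u - 1))"
    unfolding v sum_distrib_left by (rule sum.cong) (auto dest!: cases)
qed

lemma residue_count_distribution:
  fixes L :: "nat set" and t d :: nat
  assumes "t > 0" "L \<subseteq> {..<t * d}"
    and shift: "\<And>k. 1 \<le> k \<Longrightarrow> k < d \<Longrightarrow> card {i \<in> L. (i + k * t) mod (t * d) \<in> L} = 1"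
    and le_2: "\<And>u. residue_count L t u \<le> 2"
  defines "v j \<equiv> card {u \<in> {0..<t}. residue_count L t u = j}"
  shows "v 0 + v 1 + v 2 = t" "v 1 + 2 * v 2 = card L" "2 * v 2 = d - 1"
proof -
  have "finite L" using assms(2) finite_subset by blast
  note counts = level_set_counts_le_2[of "{..<t}" "residue_count L t", OF _ le_2]
  show "v 0 + v 1 + v 2 = t"
    using counts(1) by (simp add: v_def atLeast0LessThan)
  show "v 1 + 2 * v 2 = card L"
    using counts(2) sum_residue_count[OF \<open>finite L\<close> \<open>t > 0\<close>] by (simp add: v_def atLeast0LessThan)
  show "2 * v 2 = d - 1"
    using counts(3) card_same_residue_pairs_eq_sum[OF \<open>finite L\<close> \<open>t > 0\<close>]
      card_same_residue_pairs_shifts[OF assms(1-3)] by (simp add: v_def atLeast0LessThan)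
qed

section \<open>Fields with q^3 elements\<close>

lemma nonzero_power_card_minus_1:
  fixes x :: "'a::{field,finite}"
  assumes "x \<noteq> 0"
  shows "x ^ (card (UNIV :: 'a set) - 1) = 1"
proof -
  have "x ^ card (UNIV - {0::'a}) * (\<Prod>y\<in>UNIV - {0}. y) = (\<Prod>y\<in>UNIV - {0}. x * y)"
    by (simp add: prod.distrib)
  also have "\<dots> = (\<Prod>y\<in>UNIV - {0}. y)"
    by (rule prod.reindex_bij_witness[of _ "\<lambda>y. y / x" "\<lambda>y. x * y"]) (use assms in auto)
  finally show ?thesis by (simp add: card_Diff_subset)
qed

lemma frobenius_dvd_card:
  fixes u v :: "'a::{field,finite}"
  assumes "prime p" "card (UNIV :: 'a set) = p ^ n" "r dvd p ^ n"
  shows "(u + v) ^ r = u ^ r + v ^ r"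
proof -
  have char_prime: "prime CHAR('a)"
    by (rule prime_CHAR_semidom) (simp add: finite_imp_CHAR_pos)
  then have "CHAR('a) dvd p" using CHAR_dvd_CARD[where 'a = 'a] assms(2) prime_dvd_power by metis
  then have "CHAR('a) = p" using char_prime assms(1) primes_dvd_imp_eq by blast
  moreover obtain k where "r = p ^ k" using assms(3) divides_primepow_nat[OF assms(1)] by blast
  ultimately show ?thesis using freshmans_dream'[OF char_prime] by blast
qed

lemma quadratic_with_three_roots:
  fixes a b c r1 r2 r3 :: "'a::idom"
  assumes "r1 \<noteq> r2" "r1 \<noteq> r3" "r2 \<noteq> r3"
    and "a + b * r1 + c * r1\<^sup>2 = 0" "a + b * r2 + c * r2\<^sup>2 = 0" "a + b * r3 + c * r3\<^sup>2 = 0"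
  shows "a = 0 \<and> b = 0 \<and> c = 0"
proof -
  have "(r1 - r2) * (b + c * (r1 + r2)) = (a + b * r1 + c * r1\<^sup>2) - (a + b * r2 + c * r2\<^sup>2)"
    "(r1 - r3) * (b + c * (r1 + r3)) = (a + b * r1 + c * r1\<^sup>2) - (a + b * r3 + c * r3\<^sup>2)"
    by (simp_all add: algebra_simps power2_eq_square)
  then have "(r1 - r2) * (b + c * (r1 + r2)) = 0" "(r1 - r3) * (b + c * (r1 + r3)) = 0"
    using assms(4-6) by simp_all
  then have "b + c * (r1 + r2) = 0" "b + c * (r1 + r3) = 0" using assms(1,2) by simp_all
  moreover have "c * (r2 - r3) = (b + c * (r1 + r2)) - (b + c * (r1 + r3))"
    by (simp add: algebra_simps)
  ultimately have "c * (r2 - r3) = 0" by simp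
  then have "c = 0" using assms(3) by simp
  then show ?thesis using assms(4) \<open>b + c * (r1 + r2) = 0\<close> by simp
qed

definition span_pair :: "nat \<Rightarrow> 'a::field \<Rightarrow> 'a \<Rightarrow> 'a set" where
  "span_pair q x y = {a * x + b * y | a b. a \<in> Fsub q \<and> b \<in> Fsub q}"

definition indep_pair :: "nat \<Rightarrow> 'a::field \<Rightarrow> 'a \<Rightarrow> bool" where
  "indep_pair q x y \<longleftrightarrow>
     (\<forall>a b. a \<in> Fsub q \<longrightarrow> b \<in> Fsub q \<longrightarrow> a * x + b * y = 0 \<longrightarrow> a = 0 \<and> b = 0)"

locale cubic_extension =
  fixes \<alpha> :: "'a::{field,finite}" and q :: nat
  assumes frobenius: "\<And>u v :: 'a. (u + v) ^ q = u ^ q + v ^ q"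
    and q_ge_2: "q \<ge> 2"
    and card_UNIV: "card (UNIV :: 'a set) = q ^ 3"
    and primitive: "primitive_elem \<alpha>"
begin

definition "n_units = q ^ 3 - 1"

definition "m = q\<^sup>2 + q + 1"

abbreviation "F \<equiv> Fsub q :: 'a set"

lemma m_pos [simp]: "m > 0"
  by (simp add: m_def)

lemma n_units_eq: "n_units = (q - 1) * m"
  unfolding n_units_def m_def using q_ge_2
  by (cases q) (simp_all add: power2_eq_square power3_eq_cube algebra_simps)

lemma m_dvd_n_units: "m dvd n_units"
  unfolding n_units_eq by (rule dvd_triv_right)

lemma n_units_pos: "n_units > 0"
  unfolding n_units_eq using q_ge_2 by simp

lemma alpha_nonzero: "\<alpha> \<noteq> 0"
  using primitive by (simp add: primitive_elem_def)

lemma power_n_units: "x \<noteq> 0 \<Longrightarrow> x ^ n_units = 1" for x :: 'a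
  using nonzero_power_card_minus_1[of x] card_UNIV by (simp add: n_units_def)

lemma power_q_cubed: "x ^ (q ^ 3) = x" for x :: 'a
proof (cases "x = 0")
  case False
  have "Suc n_units = q ^ 3" using q_ge_2 by (simp add: n_units_def)
  then show ?thesis using power_n_units[OF False] by (metis power_Suc mult_1_right)
qed (use q_ge_2 in simp)

lemma alpha_period_ge:
  assumes "0 < n" "\<alpha> ^ n = 1"
  shows "n_units \<le> n"
proof -
  have "UNIV - {0} \<subseteq> (\<lambda>k. \<alpha> ^ k) ` {..<n}"
  proof
    fix x :: 'a assume "x \<in> UNIV - {0}"
    then obtain k where "x = \<alpha> ^ k" using primitive by (auto simp: primitive_elem_def)
    also have "\<alpha> ^ k = \<alpha> ^ (n * (k div n) + k mod n)" by simp
    also have "\<dots> = \<alpha> ^ (k mod n)" by (simp only: power_add power_mult assms(2)) simp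
    finally show "x \<in> (\<lambda>k. \<alpha> ^ k) ` {..<n}" using assms(1) by auto
  qed
  then have "card (UNIV - {0::'a}) \<le> card ((\<lambda>k. \<alpha> ^ k) ` {..<n})" by (intro card_mono) auto
  also have "\<dots> \<le> n" using card_image_le[of "{..<n}" "\<lambda>k. \<alpha> ^ k"] by simp
  finally have "card (UNIV - {0::'a}) \<le> n" .
  then show ?thesis by (simp add: card_Diff_subset card_UNIV n_units_def)
qed

lemma alpha_power_mod: "\<alpha> ^ (k mod n_units) = \<alpha> ^ k"
proof -
  have "\<alpha> ^ k = \<alpha> ^ (n_units * (k div n_units) + k mod n_units)" by simp
  also have "\<dots> = \<alpha> ^ (k mod n_units)"
    by (simp only: power_add power_mult power_n_units[OF alpha_nonzero]) simp
  finally show ?thesis ..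
qed

lemma alpha_power_eq_iff: "\<alpha> ^ a = \<alpha> ^ b \<longleftrightarrow> a mod n_units = b mod n_units"
proof
  assume eq: "\<alpha> ^ a = \<alpha> ^ b"
  have less: False if "x < y" "y < n_units" "\<alpha> ^ x = \<alpha> ^ y" for x y
  proof -
    have "\<alpha> ^ x * \<alpha> ^ (y - x) = \<alpha> ^ y" using that(1) by (simp flip: power_add)
    then have "\<alpha> ^ x * \<alpha> ^ (y - x) = \<alpha> ^ x" using that by simp
    then have "\<alpha> ^ (y - x) = 1" using alpha_nonzero by simp
    then show False using alpha_period_ge[of "y - x"] that by simp
  qed
  show "a mod n_units = b mod n_units"
    using less[of "a mod n_units" "b mod n_units"] less[of "b mod n_units" "a mod n_units"] eq
      n_units_pos by (metis alpha_power_mod linorder_neqE_nat mod_less_divisor)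
qed (metis alpha_power_mod)

lemma alpha_power_eq_imp_mod_m: "\<alpha> ^ a = \<alpha> ^ b \<Longrightarrow> a mod m = b mod m"
  by (metis alpha_power_eq_iff m_dvd_n_units mod_mod_cancel)

lemma F_iff: "x \<in> F \<longleftrightarrow> x ^ q = x"
  by (simp add: Fsub_def)

lemma frobenius_diff: "(u - v) ^ q = u ^ q - v ^ q" for u v :: 'a
  using frobenius[of "u - v" v] by simp

lemma F_zero: "0 \<in> F" and F_one: "1 \<in> F"
  using q_ge_2 by (simp_all add: F_iff)

lemma F_add: "a \<in> F \<Longrightarrow> b \<in> F \<Longrightarrow> a + b \<in> F"
  and F_diff: "a \<in> F \<Longrightarrow> b \<in> F \<Longrightarrow> a - b \<in> F"
  and F_mult: "a \<in> F \<Longrightarrow> b \<in> F \<Longrightarrow> a * b \<in> F"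
  and F_divide: "a \<in> F \<Longrightarrow> b \<in> F \<Longrightarrow> a / b \<in> F"
  by (simp_all add: F_iff frobenius frobenius_diff power_mult_distrib power_divide)

lemma F_uminus: "a \<in> F \<Longrightarrow> - a \<in> F"
  using F_diff[OF F_zero] by simp

lemma alpha_power_in_F_iff: "\<alpha> ^ k \<in> F \<longleftrightarrow> m dvd k"
proof -
  have "\<alpha> ^ k \<in> F \<longleftrightarrow> \<alpha> ^ (k * q) = \<alpha> ^ k" by (simp add: F_iff power_mult)
  also have "\<dots> \<longleftrightarrow> n_units dvd k * q - k"
    using q_ge_2 by (simp add: alpha_power_eq_iff mod_eq_dvd_iff_nat)
  also have "k * q - k = (q - 1) * k" by (simp add: diff_mult_distrib2 mult.commute)
  also have "n_units dvd (q - 1) * k \<longleftrightarrow> m dvd k"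
    by (simp only: n_units_eq nat_mult_dvd_cancel_disj) (use q_ge_2 in simp)
  finally show ?thesis .
qed

lemma F_eq_alpha_powers: "F = insert 0 ((\<lambda>j. \<alpha> ^ (j * m)) ` {..<q - 1})"
proof (intro equalityI subsetI)
  fix x assume "x \<in> F"
  show "x \<in> insert 0 ((\<lambda>j. \<alpha> ^ (j * m)) ` {..<q - 1})"
  proof (cases "x = 0")
    case False
    then obtain k where "x = \<alpha> ^ k" using primitive by (auto simp: primitive_elem_def)
    with m_dvd_n_units have "x = \<alpha> ^ (k mod n_units)" "m dvd k mod n_units"
      using \<open>x \<in> F\<close> by (auto simp: alpha_power_in_F_iff alpha_power_mod dvd_mod)
    then obtain j where j: "x = \<alpha> ^ (j * m)" "j * m < (q - 1) * m"
      using n_units_pos n_units_eq by (metis dvdE mod_less_divisor mult.commute)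
    from j(2) have "j < q - 1" by (rule mult_right_less_imp_less) simp
    then show ?thesis using j(1) by blast
  qed simp
qed (use F_zero alpha_power_in_F_iff dvd_triv_right in blast)

lemma F_nonzero_eq_alpha_power:
  assumes "c \<in> F" "c \<noteq> 0"
  obtains j where "c = \<alpha> ^ (j * m)"
  using assms by (auto simp: F_eq_alpha_powers)

lemma card_F: "card F = q"
proof -
  have "inj_on (\<lambda>j. \<alpha> ^ (j * m)) {..<q - 1}"
  proof (rule inj_onI)
    fix i j assume "i \<in> {..<q - 1}" "j \<in> {..<q - 1}" and eq: "\<alpha> ^ (i * m) = \<alpha> ^ (j * m)"
    then have "i * m < n_units" "j * m < n_units"
      unfolding n_units_eq by (simp_all only: lessThan_iff mult_less_cancel2) simp_all
    moreover from eq have "(i * m) mod n_units = (j * m) mod n_units"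
      by (simp only: alpha_power_eq_iff)
    ultimately have "i * m = j * m" by (metis mod_less)
    then show "i = j" by (simp only: mult_cancel2) (use m_pos in linarith)
  qed
  then show ?thesis
    using q_ge_2 alpha_nonzero by (simp add: F_eq_alpha_powers card_image image_iff)
qed

lemma F_power_q_minus_1:
  assumes "x \<in> F" "x \<noteq> 0"
  shows "x ^ (q - 1) = 1"
proof -
  have "x * x ^ (q - 1) = x" using assms(1) q_ge_2 by (simp add: F_iff flip: power_Suc)
  then show ?thesis using assms(2) by simp
qed

lemma in_F_if_quadratic:
  assumes "a \<in> F" "b \<in> F" "c \<in> F" "\<not> (a = 0 \<and> b = 0 \<and> c = 0)"
    and root: "a + b * \<gamma> + c * \<gamma>\<^sup>2 = 0"
  shows "\<gamma> \<in> F"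
proof -
  have conj_root: "a + b * r ^ q + c * (r ^ q)\<^sup>2 = 0" if "a + b * r + c * r\<^sup>2 = 0" for r
  proof -
    have "(a + b * r + c * r\<^sup>2) ^ q = a ^ q + b ^ q * r ^ q + c ^ q * (r\<^sup>2) ^ q"
      by (simp add: frobenius power_mult_distrib)
    also have "(r\<^sup>2) ^ q = (r ^ q)\<^sup>2" by (simp add: mult.commute flip: power_mult)
    finally show ?thesis using that assms(1-3) q_ge_2 by (simp add: F_iff power_0_left)
  qed
  define \<gamma>1 \<gamma>2 where "\<gamma>1 = \<gamma> ^ q" and "\<gamma>2 = \<gamma>1 ^ q"
  have "\<gamma>2 ^ q = \<gamma>"
    using power_q_cubed[of \<gamma>]
    by (simp add: \<gamma>1_def \<gamma>2_def flip: power_mult) (simp add: power3_eq_cube)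
  moreover have "\<gamma> = \<gamma>1 \<or> \<gamma> = \<gamma>2 \<or> \<gamma>1 = \<gamma>2"
    using quadratic_with_three_roots[OF _ _ _ root conj_root[OF root]
        conj_root[OF conj_root[OF root]]]
      assms(4) by (auto simp: \<gamma>1_def \<gamma>2_def)
  ultimately show ?thesis by (auto simp: F_iff \<gamma>1_def \<gamma>2_def)
qed

lemma span_pair_image: "span_pair q x y = (\<lambda>(a, b). a * x + b * y) ` (F \<times> F)" for x y :: 'a
  by (auto simp: span_pair_def)

lemma card_span_pair_le: "card (span_pair q x y) \<le> q * q" for x y :: 'a
  using card_image_le[of "F \<times> F" "\<lambda>(a, b). a * x + b * y"]
  by (simp add: span_pair_image card_cartesian_product card_F)

lemma card_span_pair:
  fixes x y :: 'a
  assumes "indep_pair q x y"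
  shows "card (span_pair q x y) = q * q"
proof -
  have "inj_on (\<lambda>(a, b). a * x + b * y) (F \<times> F)"
  proof (rule inj_onI, clarsimp)
    fix a b a' b' assume "a \<in> F" "b \<in> F" "a' \<in> F" "b' \<in> F" "a * x + b * y = a' * x + b' * y"
    then have "(a - a') * x + (b - b') * y = 0" "a - a' \<in> F" "b - b' \<in> F"
      by (simp_all add: algebra_simps F_diff)
    then have "a - a' = 0 \<and> b - b' = 0" using assms unfolding indep_pair_def by blast
    then show "a = a' \<and> b = b'" by simp
  qed
  then show ?thesis by (simp add: span_pair_image card_image card_cartesian_product card_F)
qed

lemma span_pair_add:
  "u \<in> span_pair q x y \<Longrightarrow> v \<in> span_pair q x y \<Longrightarrow> u + v \<in> span_pair q x y" for u v x y :: 'a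
proof (clarsimp simp: span_pair_def)
  fix a b a' b' assume "a \<in> F" "b \<in> F" "a' \<in> F" "b' \<in> F"
  then show "\<exists>c d. a * x + b * y + (a' * x + b' * y) = c * x + d * y \<and> c \<in> F \<and> d \<in> F"
    by (intro exI[of _ "a + a'"] exI[of _ "b + b'"]) (simp add: algebra_simps F_add)
qed

lemma span_pair_scale:
  "c \<in> F \<Longrightarrow> u \<in> span_pair q x y \<Longrightarrow> c * u \<in> span_pair q x y" for u x y :: 'a
proof (clarsimp simp: span_pair_def)
  fix a b assume "c \<in> F" "a \<in> F" "b \<in> F"
  then show "\<exists>a' b'. c * (a * x + b * y) = a' * x + b' * y \<and> a' \<in> F \<and> b' \<in> F"
    by (intro exI[of _ "c * a"] exI[of _ "c * b"]) (simp add: algebra_simps F_mult)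
qed

lemma span_pair_diff:
  fixes u v x y :: 'a
  assumes "u \<in> span_pair q x y" "v \<in> span_pair q x y"
  shows "u - v \<in> span_pair q x y"
  using span_pair_add[OF assms(1) span_pair_scale[OF F_uminus[OF F_one] assms(2)]] by simp

lemma span_pair_scale_iff:
  fixes u x y :: 'a
  assumes "c \<in> F" "c \<noteq> 0"
  shows "c * u \<in> span_pair q x y \<longleftrightarrow> u \<in> span_pair q x y"
  using span_pair_scale[of "1 / c" "c * u"] span_pair_scale[of c u] assms F_one F_divide
  by auto

lemma left_in_span_pair: "x \<in> span_pair q x y" for x y :: 'a
  unfolding span_pair_def using F_zero F_one by force

lemma span_pair_subset:
  fixes u v x y :: 'a
  assumes "u \<in> span_pair q x y" "v \<in> span_pair q x y"
  shows "span_pair q u v \<subseteq> span_pair q x y"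
  using assms by (auto simp: span_pair_def[of q u v] intro!: span_pair_add span_pair_scale)

lemma span_pair_eq:
  fixes u v x y :: 'a
  assumes "indep_pair q u v" "indep_pair q x y" "u \<in> span_pair q x y" "v \<in> span_pair q x y"
  shows "span_pair q u v = span_pair q x y"
  using card_subset_eq[OF _ span_pair_subset[OF assms(3,4)]]
  by (simp add: card_span_pair assms(1,2))

lemma indep_pair_nonzero: "indep_pair q x y \<Longrightarrow> x \<noteq> 0" for x y :: 'a
  using F_zero F_one by (force simp: indep_pair_def)

lemma span_pair_dependent_triple:
  fixes u1 u2 u3 x y :: 'a
  assumes "u1 \<in> span_pair q x y" "u2 \<in> span_pair q x y" "u3 \<in> span_pair q x y"
  shows "\<exists>a b c. a \<in> F \<and> b \<in> F \<and> c \<in> F \<and> \<not> (a = 0 \<and> b = 0 \<and> c = 0)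
    \<and> a * u1 + b * u2 + c * u3 = 0"
proof -
  define f where "f = (\<lambda>(a, b, c). a * u1 + b * u2 + c * u3)"
  have "f ` (F \<times> F \<times> F) \<subseteq> span_pair q x y"
  proof (rule image_subsetI, clarify)
    fix a b c assume "a \<in> F" "b \<in> F" "c \<in> F"
    then show "f (a, b, c) \<in> span_pair q x y"
      unfolding f_def using assms by (simp add: span_pair_add span_pair_scale)
  qed
  then have "card (f ` (F \<times> F \<times> F)) \<le> card (span_pair q x y)" by (intro card_mono) simp_all
  also have "\<dots> \<le> q * q" by (rule card_span_pair_le)
  moreover have "q * q < card (F \<times> F \<times> F)"
    using q_ge_2 by (simp add: card_cartesian_product card_F)
  ultimately have "\<not> inj_on f (F \<times> F \<times> F)" by (intro pigeonhole) simp
  then obtain u u' where "u \<in> F \<times> F \<times> F" "u' \<in> F \<times> F \<times> F" "u \<noteq> u'" "f u = f u'"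
    by (meson inj_onI)
  moreover obtain a b c a' b' c' where "u = (a, b, c)" "u' = (a', b', c')"
    by (cases u, cases u') blast
  moreover have "(a - a') * u1 + (b - b') * u2 + (c - c') * u3 = f (a, b, c) - f (a', b', c')"
    by (simp add: f_def algebra_simps)
  ultimately show ?thesis
    using F_diff by (intro exI[of _ "a - a'"] exI[of _ "b - b'"] exI[of _ "c - c'"]) simp
qed

lemma span_pair_meets_multiple:
  fixes g x y :: 'a
  assumes "indep_pair q x y"
  shows "\<exists>z \<in> span_pair q x y. z \<noteq> 0 \<and> g * z \<in> span_pair q x y"
proof -
  define W where "W = span_pair q x y"
  have diff: "u - v \<in> W" if "u \<in> W" "v \<in> W" for u v
    using that unfolding W_def by (rule span_pair_diff)
  define f where "f = (\<lambda>(z1, z2). g * z1 - z2)"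
  have "card (f ` (W \<times> W)) \<le> q ^ 3"
    using card_mono[of UNIV "f ` (W \<times> W)"] card_UNIV by simp
  also have "q ^ 3 < card (W \<times> W)"
    using q_ge_2 assms by (simp add: W_def card_span_pair card_cartesian_product power3_eq_cube)
  finally have "\<not> inj_on f (W \<times> W)" by (intro pigeonhole)
  then obtain p p' where "p \<in> W \<times> W" "p' \<in> W \<times> W" "p \<noteq> p'" "f p = f p'"
    by (meson inj_onI)
  moreover obtain z1 z2 z1' z2' where "p = (z1, z2)" "p' = (z1', z2')"
    by (cases p, cases p') blast
  ultimately have "z1 \<in> W" "z1' \<in> W" "z1 \<noteq> z1'" "g * (z1 - z1') = z2 - z2'" "z2 - z2' \<in> W"
    by (auto simp: f_def algebra_simps intro: diff)
  then show ?thesis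
    by (intro bexI[of _ "z1 - z1'"]) (simp_all add: diff flip: W_def)
qed

lemma in_F_if_stabilizes_span_pair:
  fixes \<gamma> x y :: 'a
  assumes "indep_pair q x y" and stable: "\<And>w. w \<in> span_pair q x y \<Longrightarrow> \<gamma> * w \<in> span_pair q x y"
  shows "\<gamma> \<in> F"
proof -
  have "\<gamma> * x \<in> span_pair q x y" "\<gamma> * (\<gamma> * x) \<in> span_pair q x y"
    using stable left_in_span_pair by blast+
  then obtain a b c where abc: "a \<in> F" "b \<in> F" "c \<in> F" "\<not> (a = 0 \<and> b = 0 \<and> c = 0)"
    "a * x + b * (\<gamma> * x) + c * (\<gamma> * (\<gamma> * x)) = 0"
    using span_pair_dependent_triple[OF left_in_span_pair] by blast
  then have "(a + b * \<gamma> + c * \<gamma>\<^sup>2) * x = 0" by (simp add: algebra_simps power2_eq_square)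
  then have "a + b * \<gamma> + c * \<gamma>\<^sup>2 = 0" using indep_pair_nonzero[OF assms(1)] by simp
  then show ?thesis using abc in_F_if_quadratic by blast
qed

subsection \<open>Points and lines\<close>

lemma line_idx_iff: "i \<in> line_idx q \<alpha> W \<longleftrightarrow> i < m \<and> \<alpha> ^ i \<in> W"
  by (auto simp: line_idx_def m_def)

lemma alpha_power_in_span_pair_iff_mod:
  "\<alpha> ^ i \<in> span_pair q x y \<longleftrightarrow> \<alpha> ^ (i mod m) \<in> span_pair q x y" for x y :: 'a
proof -
  have "\<alpha> ^ i = \<alpha> ^ (i div m * m) * \<alpha> ^ (i mod m)"
    by (simp only: div_mult_mod_eq flip: power_add)
  then show ?thesis
    using span_pair_scale_iff[of "\<alpha> ^ (i div m * m)"] alpha_power_in_F_iff alpha_nonzero by simp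
qed

lemma indep_pair_alpha_powers:
  assumes "i < m" "j < m" "i \<noteq> j"
  shows "indep_pair q (\<alpha> ^ i) (\<alpha> ^ j)"
  unfolding indep_pair_def
proof (intro allI impI)
  fix a b assume ab: "a \<in> F" "b \<in> F" "a * \<alpha> ^ i + b * \<alpha> ^ j = 0"
  show "a = 0 \<and> b = 0"
  proof (cases "b = 0")
    case False
    then have eq: "\<alpha> ^ j = (- a / b) * \<alpha> ^ i"
      using ab(3) by (simp add: field_simps add_eq_0_iff)
    have "- a / b \<in> F" using ab(1,2) F_divide F_uminus by simp
    moreover have "- a / b \<noteq> 0" using eq alpha_nonzero by auto
    ultimately obtain k where "- a / b = \<alpha> ^ (k * m)" by (rule F_nonzero_eq_alpha_power)
    then have "\<alpha> ^ j = \<alpha> ^ (k * m + i)" using eq by (simp add: power_add)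
    then have "j mod m = (k * m + i) mod m" by (rule alpha_power_eq_imp_mod_m)
    then show ?thesis using assms by simp
  qed (use ab alpha_nonzero in simp)
qed

lemma nonzero_in_span_pair_eq_scaled_point:
  fixes w x y :: 'a
  assumes "w \<in> span_pair q x y" "w \<noteq> 0"
  obtains c i where "c \<in> F" "c \<noteq> 0" "i \<in> line_idx q \<alpha> (span_pair q x y)" "w = c * \<alpha> ^ i"
proof -
  obtain k where k: "w = \<alpha> ^ k" using assms(2) primitive by (auto simp: primitive_elem_def)
  have "\<alpha> ^ k = \<alpha> ^ (k div m * m) * \<alpha> ^ (k mod m)"
    by (simp only: div_mult_mod_eq flip: power_add)
  moreover have "k mod m \<in> line_idx q \<alpha> (span_pair q x y)"
    using assms(1) k alpha_power_in_span_pair_iff_mod by (simp add: line_idx_iff)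
  ultimately show ?thesis
    using alpha_power_in_F_iff alpha_nonzero k
    by (intro that[of "\<alpha> ^ (k div m * m)" "k mod m"]) simp_all
qed

lemma card_line_idx:
  fixes x y :: 'a
  assumes "indep_pair q x y"
  shows "card (line_idx q \<alpha> (span_pair q x y)) = q + 1"
proof -
  define W where "W = span_pair q x y"
  define L where "L = line_idx q \<alpha> W"
  define f where "f = (\<lambda>(c, i). c * \<alpha> ^ i)"
  have "bij_betw f ((F - {0}) \<times> L) (W - {0})"
  proof (rule bij_betwI')
    fix p p' assume "p \<in> (F - {0}) \<times> L" "p' \<in> (F - {0}) \<times> L"
    then obtain c i c' i' where cc: "p = (c, i)" "p' = (c', i')" "c \<in> F" "c' \<in> F" "c \<noteq> 0" "c' \<noteq> 0"
      "i < m" "i' < m" by (cases p, cases p') (auto simp: L_def line_idx_iff)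
    show "f p = f p' \<longleftrightarrow> p = p'"
    proof
      assume eq: "f p = f p'"
      have "i = i'"
      proof (rule ccontr)
        assume "i \<noteq> i'"
        then have "indep_pair q (\<alpha> ^ i) (\<alpha> ^ i')" using cc by (intro indep_pair_alpha_powers)
        moreover have "c * \<alpha> ^ i + (- c') * \<alpha> ^ i' = 0" using eq by (simp add: f_def cc)
        ultimately have "c = 0" using cc F_uminus unfolding indep_pair_def by blast
        then show False using cc by simp
      qed
      then show "p = p'" using eq cc alpha_nonzero by (simp add: f_def)
    qed simp
  next
    fix p assume "p \<in> (F - {0}) \<times> L"
    then show "f p \<in> W - {0}"
      using alpha_nonzero by (auto simp: f_def L_def line_idx_iff W_def intro: span_pair_scale)
  next
    fix w assume "w \<in> W - {0}"
    then obtain c i where "c \<in> F" "c \<noteq> 0" "i \<in> L" "w = c * \<alpha> ^ i"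
      unfolding W_def L_def by (auto elim: nonzero_in_span_pair_eq_scaled_point)
    then show "\<exists>p \<in> (F - {0}) \<times> L. w = f p" by (auto simp: f_def)
  qed
  then have "card ((F - {0}) \<times> L) = card (W - {0})" by (rule bij_betw_same_card)
  moreover have "0 \<in> W" using span_pair_scale[OF F_zero left_in_span_pair] by (simp add: W_def)
  ultimately have "(q - 1) * card L = q * q - 1"
    using F_zero card_F card_span_pair[OF assms]
    by (simp add: card_cartesian_product card_Diff_singleton W_def)
  also have "q * q - 1 = (q - 1) * (q + 1)" by (simp add: algebra_simps)
  finally have "card L = q + 1" using q_ge_2 by (simp only: mult_cancel1) linarith
  then show ?thesis by (simp add: L_def W_def)
qed

theorem line_idx_perfect_difference_set:
  fixes x y :: 'a
  assumes "indep_pair q x y" "\<not> m dvd g"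
  defines "L \<equiv> line_idx q \<alpha> (span_pair q x y)"
  shows "card {i \<in> L. (i + g) mod m \<in> L} = 1"
proof -
  define W where "W = span_pair q x y"
  define \<gamma> where "\<gamma> = \<alpha> ^ g"
  have shifted: "(i + g) mod m \<in> L \<longleftrightarrow> \<gamma> * \<alpha> ^ i \<in> W" for i
    using alpha_power_in_span_pair_iff_mod[of "i + g"] m_pos
    by (simp add: L_def line_idx_iff \<gamma>_def W_def power_add mult.commute)
  obtain z where z: "z \<in> W" "z \<noteq> 0" "\<gamma> * z \<in> W"
    using span_pair_meets_multiple[OF assms(1)] by (auto simp: W_def)
  then obtain c i where ci: "c \<in> F" "c \<noteq> 0" "i \<in> L" "z = c * \<alpha> ^ i"
    unfolding W_def L_def by (auto elim: nonzero_in_span_pair_eq_scaled_point)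
  have "\<gamma> * \<alpha> ^ i \<in> W"
    using z(3) ci span_pair_scale_iff[of c "\<gamma> * \<alpha> ^ i"] by (simp add: W_def mult.left_commute)
  then have i: "i \<in> {i \<in> L. (i + g) mod m \<in> L}" using ci shifted by simp
  have "j = i" if j: "j \<in> {i \<in> L. (i + g) mod m \<in> L}" for j
  proof (rule ccontr)
    assume "j \<noteq> i"
    have ij: "i < m" "j < m" "\<alpha> ^ i \<in> W" "\<alpha> ^ j \<in> W" "\<gamma> * \<alpha> ^ i \<in> W" "\<gamma> * \<alpha> ^ j \<in> W"
      using i j shifted by (auto simp: L_def W_def line_idx_iff)
    then have "span_pair q (\<alpha> ^ i) (\<alpha> ^ j) = W"
      using span_pair_eq indep_pair_alpha_powers \<open>j \<noteq> i\<close> assms(1) by (simp add: W_def)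
    have "\<gamma> * w \<in> W" if w: "w \<in> W" for w
    proof -
      obtain a b where "a \<in> F" "b \<in> F" "w = a * \<alpha> ^ i + b * \<alpha> ^ j"
        using w \<open>span_pair q (\<alpha> ^ i) (\<alpha> ^ j) = W\<close> unfolding span_pair_def by blast
      moreover from this have "\<gamma> * w = a * (\<gamma> * \<alpha> ^ i) + b * (\<gamma> * \<alpha> ^ j)"
        by (simp add: algebra_simps)
      ultimately show ?thesis using ij by (simp add: W_def span_pair_add span_pair_scale)
    qed
    then have "\<gamma> \<in> F" using in_F_if_stabilizes_span_pair[OF assms(1)] by (simp add: W_def)
    then show False using assms(2) alpha_power_in_F_iff by (simp add: \<gamma>_def)
  qed
  then have "{i \<in> L. (i + g) mod m \<in> L} = {i}" using i by blast
  then show ?thesis by simp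
qed

end

section \<open>The case q = s^2\<close>

lemma nat_square_factors:
  fixes s :: nat
  assumes "s \<ge> 1"
  shows "(s\<^sup>2)\<^sup>2 + s\<^sup>2 + 1 = (s\<^sup>2 + s + 1) * (s\<^sup>2 - s + 1)"
    and "(s\<^sup>2 - 1) * (s\<^sup>2 - s + 1) = (s ^ 3 + 1) * (s - 1)"
  using assms by (cases s; simp add: power2_eq_square power3_eq_cube algebra_simps)+

locale square_cubic_extension = cubic_extension \<alpha> q for \<alpha> :: "'a::{field,finite}" and q +
  fixes s :: nat
  assumes q_eq_square: "q = s\<^sup>2"
    and frobenius_s: "\<And>u v :: 'a. (u + v) ^ s = u ^ s + v ^ s"
begin

lemma s_ge_2: "s \<ge> 2"
proof (rule ccontr)
  assume "\<not> s \<ge> 2"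
  then have "s\<^sup>2 \<le> 1\<^sup>2" by (intro power_mono) simp_all
  then show False using q_ge_2 q_eq_square by simp
qed

(* D = (q - 1) d is the order of alpha^t for t = s^2 + s + 1, and its factorisation
   (s^3 + 1)(s - 1) puts x^(s^3 + 1) into F_s whenever x^D = 1. *)
definition "D = (s ^ 3 + 1) * (s - 1)"

lemma m_eq: "m = (s\<^sup>2 + s + 1) * (s\<^sup>2 - s + 1)"
  unfolding m_def unfolding q_eq_square using nat_square_factors(1)[of s] s_ge_2 by simp

lemma n_units_eq_D: "n_units = (s\<^sup>2 + s + 1) * D"
proof -
  have "n_units = (s\<^sup>2 + s + 1) * ((s\<^sup>2 - 1) * (s\<^sup>2 - s + 1))"
    unfolding n_units_eq m_eq unfolding q_eq_square by (simp only: ac_simps)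
  then show ?thesis using nat_square_factors(2)[of s] s_ge_2 by (simp add: D_def)
qed

lemma frobenius_s_power: "(u + v) ^ (s ^ k) = u ^ (s ^ k) + v ^ (s ^ k)" for u v :: 'a
proof (induction k)
  case (Suc k)
  have "(u + v) ^ (s ^ Suc k) = ((u + v) ^ (s ^ k)) ^ s" by (simp only: power_Suc2 power_mult)
  also have "\<dots> = (u ^ (s ^ k)) ^ s + (v ^ (s ^ k)) ^ s" by (simp only: Suc.IH frobenius_s)
  finally show ?case by (simp only: power_Suc2 power_mult)
qed simp

lemma frobenius_s_diff: "(u - v) ^ s = u ^ s - v ^ s" for u v :: 'a
  using frobenius_s[of "u - v" v] by simp

lemma in_F_if_power_s_fixed: "x ^ s = x \<Longrightarrow> x \<in> F" for x :: 'a
  unfolding F_iff unfolding q_eq_square by (simp add: power2_eq_square power_mult)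

lemma F_power_D: "c \<in> F \<Longrightarrow> c \<noteq> 0 \<Longrightarrow> c ^ D = 1" for c :: 'a
proof -
  assume "c \<in> F" "c \<noteq> 0"
  then have "c ^ (q - 1) = 1" by (rule F_power_q_minus_1)
  moreover have "D = (q - 1) * (s\<^sup>2 - s + 1)"
    using nat_square_factors(2)[of s] s_ge_2 by (simp add: D_def q_eq_square)
  ultimately show ?thesis by (simp only: power_mult) simp
qed

lemma power_s_cubed_Suc_fixed:
  fixes x :: 'a
  assumes "x ^ D = 1"
  shows "(x ^ (s ^ 3 + 1)) ^ s = x ^ (s ^ 3 + 1)"
proof -
  have "(x ^ (s ^ 3 + 1)) ^ (s - 1) = 1" using assms by (simp only: D_def power_mult)
  moreover have "s = Suc (s - 1)" using s_ge_2 by simp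
  ultimately show ?thesis by (metis power_Suc2 mult_1_left)
qed

lemma in_F_if_translate_D_roots:
  fixes y e :: 'a
  assumes y: "y ^ D = 1" and ye: "(y + e) ^ D = 1" and "e \<in> F" "e \<noteq> 0"
  shows "y \<in> F"
proof -
  define n where "n = s ^ 3"
  define l \<mu> \<nu> where "l = y ^ Suc n" and "\<mu> = (y + e) ^ Suc n"
    and "\<nu> = e * y ^ n + e ^ s * y"
  have e_q: "e ^ q = e" using \<open>e \<in> F\<close> by (simp add: F_iff)
  have e_s_s: "(e ^ s) ^ s = e"
    using e_q unfolding q_eq_square by (simp add: power2_eq_square power_mult)
  have "e ^ n = e ^ s"
    unfolding n_def power3_eq_cube by (simp only: power_mult e_s_s)
  then have "(y + e) ^ n = y ^ n + e ^ s"
    using frobenius_s_power[of y e 3] by (simp add: n_def)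
  then have \<mu>_eq: "\<mu> = l + \<nu> + e ^ s * e"
    by (simp add: \<mu>_def l_def \<nu>_def algebra_simps)
  have "l ^ s = l" "\<mu> ^ s = \<mu>"
    using power_s_cubed_Suc_fixed[OF y] power_s_cubed_Suc_fixed[OF ye]
    by (simp_all add: l_def \<mu>_def n_def)
  moreover have "(e ^ s * e) ^ s = e ^ s * e"
    using e_s_s by (simp add: power_mult_distrib)
  moreover have "\<nu> = \<mu> - l - e ^ s * e" using \<mu>_eq by simp
  ultimately have "\<nu> ^ s = \<nu>" by (simp add: frobenius_s_diff)
  have "e ^ s \<in> F"
    using e_q unfolding F_iff by (simp flip: power_mult) (simp add: mult.commute power_mult)
  moreover have "e * l + (- \<nu>) * y + e ^ s * y\<^sup>2 = 0"
    by (simp add: l_def \<nu>_def algebra_simps power2_eq_square)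
  moreover have "e * l \<in> F" "- \<nu> \<in> F"
    using \<open>l ^ s = l\<close> \<open>\<nu> ^ s = \<nu>\<close> \<open>e \<in> F\<close>
    by (simp_all add: F_mult F_uminus in_F_if_power_s_fixed)
  moreover have "e ^ s \<noteq> 0" using \<open>e \<noteq> 0\<close> by simp
  ultimately show ?thesis using in_F_if_quadratic[of "e * l" "- \<nu>" "e ^ s" y] by blast
qed

lemma alpha_power_quotient_D_root:
  assumes "i mod (s\<^sup>2 + s + 1) = j mod (s\<^sup>2 + s + 1)"
  shows "(\<alpha> ^ j / \<alpha> ^ i) ^ D = 1"
proof -
  have "(j * D) mod n_units = (j mod (s\<^sup>2 + s + 1)) * D"
    "(i * D) mod n_units = (i mod (s\<^sup>2 + s + 1)) * D"
    unfolding n_units_eq_D by (simp_all only: mod_mult_mult2)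
  then have "(j * D) mod n_units = (i * D) mod n_units" using assms by simp
  then have "\<alpha> ^ (j * D) = \<alpha> ^ (i * D)" by (simp add: alpha_power_eq_iff)
  then show ?thesis using alpha_nonzero by (simp add: power_divide power_mult)
qed

lemma line_idx_no_three_same_residue:
  fixes x y :: 'a
  defines "L \<equiv> line_idx q \<alpha> (span_pair q x y)"
  assumes "i1 \<in> L" "i2 \<in> L" "i3 \<in> L" "i1 \<noteq> i2" "i1 \<noteq> i3" "i2 \<noteq> i3"
    and "i1 mod (s\<^sup>2 + s + 1) = i2 mod (s\<^sup>2 + s + 1)" "i1 mod (s\<^sup>2 + s + 1) = i3 mod (s\<^sup>2 + s + 1)"
  shows False
proof -
  have pts: "i1 < m" "i2 < m" "i3 < m"
    "\<alpha> ^ i1 \<in> span_pair q x y" "\<alpha> ^ i2 \<in> span_pair q x y" "\<alpha> ^ i3 \<in> span_pair q x y"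
    using assms(2-4) by (simp_all add: L_def line_idx_iff)
  obtain a b c where abc: "a \<in> F" "b \<in> F" "c \<in> F" "\<not> (a = 0 \<and> b = 0 \<and> c = 0)"
    "a * \<alpha> ^ i1 + b * \<alpha> ^ i2 + c * \<alpha> ^ i3 = 0"
    using span_pair_dependent_triple[OF pts(4-6)] by blast
  have indep: "indep_pair q (\<alpha> ^ i) (\<alpha> ^ j)"
    if "i \<in> {i1, i2, i3}" "j \<in> {i1, i2, i3}" "i \<noteq> j" for i j
    using that pts assms(5-7) by (auto intro!: indep_pair_alpha_powers)
  have no_relation: False
    if "u \<in> F" "v \<in> F" "\<not> (u = 0 \<and> v = 0)" "u * \<alpha> ^ i + v * \<alpha> ^ j = 0"
      "i \<in> {i1, i2, i3}" "j \<in> {i1, i2, i3}" "i \<noteq> j" for u v i j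
    using indep[OF that(5-7)] that(1-4) unfolding indep_pair_def by blast
  have "a \<noteq> 0" using no_relation[of b c i2 i3] abc assms(7) by (auto simp: algebra_simps)
  have "b \<noteq> 0" using no_relation[of a c i1 i3] abc assms(6) by (auto simp: algebra_simps)
  have "c \<noteq> 0" using no_relation[of a b i1 i2] abc assms(5) by auto
  define r z w where "r = \<alpha> ^ i2 / \<alpha> ^ i1" and "z = \<alpha> ^ i3 / \<alpha> ^ i1" and "w = - c / b"
  have "(r + a / b - w * z) * (b * \<alpha> ^ i1) = a * \<alpha> ^ i1 + b * \<alpha> ^ i2 + c * \<alpha> ^ i3"
    using \<open>b \<noteq> 0\<close> alpha_nonzero by (simp add: r_def z_def w_def field_simps)
  then have "r + a / b = w * z" using abc(5) \<open>b \<noteq> 0\<close> alpha_nonzero by simp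
  moreover have "r ^ D = 1" "z ^ D = 1"
    unfolding r_def z_def using assms(8,9) by (simp_all add: alpha_power_quotient_D_root)
  moreover have "w ^ D = 1" using abc \<open>b \<noteq> 0\<close> \<open>c \<noteq> 0\<close>
    by (simp add: w_def F_divide F_uminus F_power_D)
  ultimately have "r \<in> F"
    using \<open>a \<noteq> 0\<close> \<open>b \<noteq> 0\<close> abc(1,2) F_divide
    by (intro in_F_if_translate_D_roots[of r "a / b"]) (simp_all add: power_mult_distrib)
  moreover have "r * \<alpha> ^ i1 + (- 1) * \<alpha> ^ i2 = 0" using alpha_nonzero by (simp add: r_def)
  ultimately show False
    using indep[of i1 i2] assms(5) F_uminus[OF F_one] unfolding indep_pair_def by fastforce
qed

lemma residue_count_line_idx_le_2:
  "residue_count (line_idx q \<alpha> (span_pair q x y)) (s\<^sup>2 + s + 1) u \<le> 2" for x y :: 'a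
  unfolding residue_count_def
proof (rule card_le_2_if_no_three_distinct)
  fix i1 i2 i3
  assume "i1 \<in> {i \<in> line_idx q \<alpha> (span_pair q x y). i mod (s\<^sup>2 + s + 1) = u}"
    "i2 \<in> {i \<in> line_idx q \<alpha> (span_pair q x y). i mod (s\<^sup>2 + s + 1) = u}"
    "i3 \<in> {i \<in> line_idx q \<alpha> (span_pair q x y). i mod (s\<^sup>2 + s + 1) = u}"
    "i1 \<noteq> i2" "i1 \<noteq> i3" "i2 \<noteq> i3"
  then show False by (intro line_idx_no_three_same_residue[of i1 x y i2 i3]) auto
qed

theorem line_residue_distribution:
  fixes x y :: 'a
  assumes "indep_pair q x y"
  defines "v j \<equiv> card {u \<in> {0..<s\<^sup>2 + s + 1}.
    residue_count (line_idx q \<alpha> (span_pair q x y)) (s\<^sup>2 + s + 1) u = j}"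
  shows "2 * v 0 = q + s" "v 1 = s + 1" "2 * v 2 = q - s"
proof -
  define L t d where "L = line_idx q \<alpha> (span_pair q x y)"
    and "t = s\<^sup>2 + s + 1" and "d = s\<^sup>2 - s + 1"
  have m: "m = t * d" by (simp add: m_eq t_def d_def)
  have shift: "card {i \<in> L. (i + k * t) mod (t * d) \<in> L} = 1" if "1 \<le> k" "k < d" for k
  proof -
    have "0 < k * t" using that by (simp add: t_def)
    moreover have "k * t < d * t" using that by (intro mult_strict_right_mono) (simp_all add: t_def)
    ultimately have "0 < k * t" "k * t < m" by (simp_all add: m mult.commute)
    then have "\<not> m dvd k * t" by (auto dest: dvd_imp_le)
    then show ?thesis using line_idx_perfect_difference_set[OF assms(1)] by (simp add: L_def m)
  qed
  have "L \<subseteq> {..<t * d}" by (auto simp: L_def line_idx_iff m)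
  note distribution = residue_count_distribution[OF _ this shift
      residue_count_line_idx_le_2[of x y, folded L_def t_def]]
  have "v 0 + v 1 + v 2 = s\<^sup>2 + s + 1" "v 1 + 2 * v 2 = q + 1" "2 * v 2 = s\<^sup>2 - s"
    using distribution card_line_idx[OF assms(1)] s_ge_2 by (simp_all add: v_def L_def t_def d_def)
  moreover have "s \<le> s\<^sup>2" by (simp add: power2_eq_square)
  ultimately show "2 * v 0 = q + s" "v 1 = s + 1" "2 * v 2 = q - s"
    using q_eq_square by arith+
qed

end

lemma square_cubic_extension_prime_power:
  fixes \<alpha> :: "'a::{field,finite}"
  assumes "prime p" "h \<ge> 1" "q = p ^ h" "card (UNIV :: 'a set) = q ^ 3" "primitive_elem \<alpha>"
    and "q = s\<^sup>2"
  shows "square_cubic_extension \<alpha> q s"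
proof -
  have card: "card (UNIV :: 'a set) = p ^ (h * 3)" using assms(3,4) by (simp add: power_mult)
  have q_dvd: "q dvd p ^ (h * 3)" using assms(3) by (simp add: power_mult)
  moreover have "s dvd q" using assms(6) by simp
  ultimately have s_dvd: "s dvd p ^ (h * 3)" by (rule dvd_trans[rotated])
  have "2 \<le> q" using assms(1-3) prime_ge_2_nat[of p] self_le_power[of p h] by simp
  then show ?thesis
    using assms(4-6) frobenius_dvd_card[OF assms(1) card q_dvd]
      frobenius_dvd_card[OF assms(1) card s_dvd]
    by unfold_locales
qed

theorem proposition8:
  fixes \<alpha> :: "'a::{field,finite}" and p h q s :: nat and W :: "'a set"
  assumes "prime p" and "h \<ge> 1" and "q = p ^ h"
    and "card (UNIV :: 'a set) = q ^ 3"
    and "primitive_elem \<alpha>"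
    and "is_line_subspace q W"
    and "(\<lambda>i. (i * p) mod (q^2+q+1)) ` line_idx q \<alpha> W = line_idx q \<alpha> W"
    and "q = s ^ 2"
  defines "d \<equiv> q - s + 1"
  defines "t \<equiv> (q^2+q+1) div d"
  defines "w \<equiv> (\<lambda>u. card {i \<in> line_idx q \<alpha> W. i mod t = u})"
  defines "v \<equiv> (\<lambda>j. card {u \<in> {0..<t}. w u = j})"
  shows "d dvd (q^2+q+1) \<and> t = q + s + 1 \<and> (\<forall>u<t. w u \<le> 2)
         \<and> 2 * v 0 = q + s \<and> v 1 = s + 1 \<and> 2 * v 2 = q - s"
proof -
  obtain x y where line: "indep_pair q x y" "W = span_pair q x y"
    using assms(6) unfolding is_line_subspace_def indep_pair_def span_pair_def by blast
  interpret square_cubic_extension \<alpha> q s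
    using square_cubic_extension_prime_power assms(1-5,8) by blast
  have m: "q\<^sup>2 + q + 1 = (s\<^sup>2 + s + 1) * (s\<^sup>2 - s + 1)" using m_eq unfolding m_def .
  have d: "d = s\<^sup>2 - s + 1" by (simp add: d_def assms(8))
  have t: "t = s\<^sup>2 + s + 1" unfolding t_def m d by (rule nonzero_mult_div_cancel_right) simp
  have w: "w = residue_count (line_idx q \<alpha> (span_pair q x y)) (s\<^sup>2 + s + 1)"
    by (simp add: w_def residue_count_def line(2) t fun_eq_iff)
  have "d dvd q\<^sup>2 + q + 1" unfolding m d by (rule dvd_triv_right)
  moreover have "t = q + s + 1" using t assms(8) by simp
  ultimately show ?thesis
    using line_residue_distribution[OF line(1)] residue_count_line_idx_le_2
    by (simp add: v_def w t)
qed

end
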